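(* Let $P_1,\dots,P_5$ be any five points in the plane, with indices taken mod $5$. Define the following oriented areas: - $t_i=(P_{i-1}P_iP_{i+1})$ for $i=1,\dots,5$; - $A$, the oriented area of the closed polygon $P_1P_2P_3P_4P_5$; - $A'$, the oriented area of the closed (star) polygon $P_1P_3P_5P_2P_4$; - $t'_1=(P_4P_1P_3)$, $t'_3=(P_1P_3P_5)$, $t'_5=(P_3P_5P_2)$, $t'_2=(P_5P_2P_4)$, $t'_4=(P_2P_4P_1)$. Set $$c_1=\sum_{i=1}^5 t_i,\qquad c_2=t_1t_2+t_2t_3+t_3t_4+t_4t_5+t_5t_1,$$ $$c_1'=\sum_{i=1}^5 t'_i,\qquad c_2'=t'_1t'_3+t'_3t'_5+t'_5t'_2+t'_2t'_4+t'_4t'_1.$$ Then $$c_1=2A-A',\quad c_2=A(A-A'),\quad c_1'=2A'+A,\quad c_2'=A'(A+A'),$$ and consequently $$A^2-c_1A+c_2=0,\qquad A'^2-c_1^2+4c_2=0,\qquad A^2-c_1'^2+4c_2'=0,\qquad A'^2-c_1'A'+c_2'=0.$$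
   Context: For points $X,Y,Z$ in the plane, the oriented area is $(XYZ)=\tfrac12\det(Y-X,\,Z-X)$. The oriented area of a closed polygon $Q_1Q_2\cdots Q_m$ with $Q_j=(x_j,y_j)$ is $\tfrac12\sum_{j=1}^m (x_jy_{j+1}-x_{j+1}y_j)$, with indices mod $m$. The $t'_i$ are the oriented areas of the vertex triangles of the star pentagon $P_1P_3P_5P_2P_4$. *)

theory Defs
  imports Complex_Main
begin

type_synonym point = "real \<times> real"

definition oarea :: "point \<Rightarrow> point \<Rightarrow> point \<Rightarrow> real" where
  "oarea X Y Z = ((fst Y - fst X) * (snd Z - snd X) - (snd Y - snd X) * (fst Z - fst X)) / 2"

definition poly_area :: "point list \<Rightarrow> real" where
  "poly_area Qs = (let m = length Qs in
     (\<Sum>j<m. fst (Qs ! j) * snd (Qs ! ((j + 1) mod m)) - fst (Qs ! ((j + 1) mod m)) * snd (Qs ! j)) / 2)"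

end

theory Submission
  imports Defs
begin

(* Writing every area as a fan of triangles based at P1 turns all t_i, A and A' into linear
   combinations of the six areas (P1 Pj Pk), 2 \<le> j < k \<le> 5.  Then c1 = 2A - A' is linear, and
   c2 - A (A - A') is a multiple of the Grassmann-Pluecker relation among those six areas.
   Hence A and A - A' are the roots of x^2 - c1 x + c2, whose discriminant is A'^2.  The vertex
   triangles of the star pentagon P1P3P5P2P4 are the t'_i, and its own star pentagon is
   P1P5P4P3P2, of area -A; so the primed identities are the unprimed ones for the star. *)

lemma oarea_rotate: "oarea Y Z X = oarea X Y Z"
  unfolding oarea_def by argo

lemma oarea_swap: "oarea X Z Y = - oarea X Y Z"
  unfolding oarea_def by argo

lemma oarea_degenerate [simp]: "oarea X X Y = 0" "oarea X Y X = 0"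
  unfolding oarea_def by simp_all

lemma oarea_eq_fan: "oarea X Y Z = oarea Q X Y + oarea Q Y Z + oarea Q Z X"
  unfolding oarea_def by (simp add: field_simps)

lemma oarea_pluecker:
  "oarea Q B C * oarea Q D E - oarea Q B D * oarea Q C E + oarea Q B E * oarea Q C D = 0"
  unfolding oarea_def by (simp add: field_simps)

lemma poly_area_eq_origin_fan:
  "poly_area Qs = (\<Sum>j<length Qs. oarea (0, 0) (Qs ! j) (Qs ! ((j + 1) mod length Qs)))"
  unfolding poly_area_def oarea_def Let_def by (simp add: sum_divide_distrib mult.commute)

lemma sum_lessThan_5: "(\<Sum>j<(5::nat). f j) = f 0 + f 1 + f 2 + f 3 + f 4"
  by (simp add: numeral_eq_Suc)

lemma poly_area_pentagon_fan:
  "poly_area [P1, P2, P3, P4, P5] =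
     oarea Q P1 P2 + oarea Q P2 P3 + oarea Q P3 P4 + oarea Q P4 P5 + oarea Q P5 P1"
proof -
  have "poly_area [P1, P2, P3, P4, P5] = oarea (0, 0) P1 P2 + oarea (0, 0) P2 P3
      + oarea (0, 0) P3 P4 + oarea (0, 0) P4 P5 + oarea (0, 0) P5 P1"
    unfolding poly_area_eq_origin_fan by (simp add: sum_lessThan_5)
  then show ?thesis
    using oarea_eq_fan[of Q P1 P2 "(0, 0)"] oarea_eq_fan[of Q P2 P3 "(0, 0)"]
      oarea_eq_fan[of Q P3 P4 "(0, 0)"] oarea_eq_fan[of Q P4 P5 "(0, 0)"]
      oarea_eq_fan[of Q P5 P1 "(0, 0)"]
      oarea_swap[of "(0, 0)" Q P1] oarea_swap[of "(0, 0)" Q P2] oarea_swap[of "(0, 0)" Q P3]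
      oarea_swap[of "(0, 0)" Q P4] oarea_swap[of "(0, 0)" Q P5]
    by argo
qed

lemma poly_area_pentagon_reverse:
  "poly_area [P1, P5, P4, P3, P2] = - poly_area [P1, P2, P3, P4, P5]"
  unfolding poly_area_pentagon_fan[where Q = P1]
  using oarea_swap[of P1 P3 P2] oarea_swap[of P1 P4 P3] oarea_swap[of P1 P5 P4]
  by simp

lemma pentagon_vertex_areas_symmetric_functions:
  fixes P1 P2 P3 P4 P5 :: point
  defines "t1 \<equiv> oarea P5 P1 P2" and "t2 \<equiv> oarea P1 P2 P3" and "t3 \<equiv> oarea P2 P3 P4"
      and "t4 \<equiv> oarea P3 P4 P5" and "t5 \<equiv> oarea P4 P5 P1"
      and "A \<equiv> poly_area [P1, P2, P3, P4, P5]" and "A' \<equiv> poly_area [P1, P3, P5, P2, P4]"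
  shows "t1 + t2 + t3 + t4 + t5 = 2 * A - A'"
    and "t1 * t2 + t2 * t3 + t3 * t4 + t4 * t5 + t5 * t1 = A * (A - A')"
proof -
  define a b c d e f where
    "a = oarea P1 P2 P3" and "b = oarea P1 P2 P4" and "c = oarea P1 P2 P5"
    and "d = oarea P1 P3 P4" and "e = oarea P1 P3 P5" and "f = oarea P1 P4 P5"
  have t: "t1 = c" "t2 = a" "t3 = a + d - b" "t4 = d + f - e" "t5 = f"
    unfolding assms a_def b_def c_def d_def e_def f_def
    using oarea_eq_fan[of P2 P3 P4 P1] oarea_eq_fan[of P3 P4 P5 P1]
      oarea_swap[of P1 P4 P2] oarea_swap[of P1 P5 P3]
    by (simp_all add: oarea_rotate[of P5 P1 P2] oarea_rotate[of P2 P5 P1] oarea_rotate[of P4 P5 P1])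
  have areas: "A = a + d + f" "A' = b - c + e"
    unfolding assms a_def b_def c_def d_def e_def f_def poly_area_pentagon_fan[where Q = P1]
    by (simp_all add: oarea_swap[of P1 P5 P2])
  have "a * f - b * e + c * d = 0"
    unfolding a_def b_def c_def d_def e_def f_def by (rule oarea_pluecker)
  then show "t1 * t2 + t2 * t3 + t3 * t4 + t4 * t5 + t5 * t1 = A * (A - A')"
    unfolding t areas by algebra
  show "t1 + t2 + t3 + t4 + t5 = 2 * A - A'"
    unfolding t areas by simp
qed

lemma vieta_quadratic:
  fixes a b c1 c2 :: "'a :: comm_ring_1"
  assumes "c1 = a + b" and "c2 = a * b"
  shows "a\<^sup>2 - c1 * a + c2 = 0" and "(a - b)\<^sup>2 = c1\<^sup>2 - 4 * c2"
  using assms by (simp_all add: power2_eq_square algebra_simps)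

theorem theorem2:
  fixes P1 P2 P3 P4 P5 :: point
  defines "t1 \<equiv> oarea P5 P1 P2"
      and "t2 \<equiv> oarea P1 P2 P3"
      and "t3 \<equiv> oarea P2 P3 P4"
      and "t4 \<equiv> oarea P3 P4 P5"
      and "t5 \<equiv> oarea P4 P5 P1"
      and "A \<equiv> poly_area [P1, P2, P3, P4, P5]"
      and "A' \<equiv> poly_area [P1, P3, P5, P2, P4]"
      and "t1' \<equiv> oarea P4 P1 P3"
      and "t3' \<equiv> oarea P1 P3 P5"
      and "t5' \<equiv> oarea P3 P5 P2"
      and "t2' \<equiv> oarea P5 P2 P4"
      and "t4' \<equiv> oarea P2 P4 P1"
  shows "let c1 = t1 + t2 + t3 + t4 + t5;
             c2 = t1 * t2 + t2 * t3 + t3 * t4 + t4 * t5 + t5 * t1;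
             c1' = t1' + t2' + t3' + t4' + t5';
             c2' = t1' * t3' + t3' * t5' + t5' * t2' + t2' * t4' + t4' * t1'
         in c1 = 2 * A - A' \<and> c2 = A * (A - A') \<and> c1' = 2 * A' + A \<and> c2' = A' * (A + A') \<and>
         A\<^sup>2 - c1 * A + c2 = 0 \<and> A'\<^sup>2 - c1\<^sup>2 + 4 * c2 = 0 \<and>
         A\<^sup>2 - c1'\<^sup>2 + 4 * c2' = 0 \<and> A'\<^sup>2 - c1' * A' + c2' = 0"
proof -
  define c1 c2 c1' c2' where "c1 = t1 + t2 + t3 + t4 + t5"
    and "c2 = t1 * t2 + t2 * t3 + t3 * t4 + t4 * t5 + t5 * t1"
    and "c1' = t1' + t2' + t3' + t4' + t5'"
    and "c2' = t1' * t3' + t3' * t5' + t5' * t2' + t2' * t4' + t4' * t1'"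
  have star_of_star: "poly_area [P1, P5, P4, P3, P2] = - A"
    unfolding A_def by (rule poly_area_pentagon_reverse)
  note pentagon = pentagon_vertex_areas_symmetric_functions[where ?P1.0 = P1 and ?P2.0 = P2
      and ?P3.0 = P3 and ?P4.0 = P4 and ?P5.0 = P5, folded assms]
  note star = pentagon_vertex_areas_symmetric_functions[where ?P1.0 = P1 and ?P2.0 = P3
      and ?P3.0 = P5 and ?P4.0 = P2 and ?P5.0 = P4, unfolded star_of_star, folded assms]
  have c1: "c1 = A + (A - A')" and c2: "c2 = A * (A - A')"
    using pentagon unfolding c1_def c2_def by linarith+
  have c1': "c1' = A' + (A' + A)" and c2': "c2' = A' * (A' + A)"
    using star unfolding c1'_def c2'_def by (linarith, simp)
  show ?thesis
    unfolding Let_def c1_def[symmetric] c2_def[symmetric] c1'_def[symmetric] c2'_def[symmetric]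
    using vieta_quadratic[OF c1 c2] vieta_quadratic[OF c1' c2'] c1 c2 c1' c2'
    by simp
qed

end
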